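(* For $n\ge 2$, the star $K_{1,n}$ satisfies $\nu^*(K_{1,n})=\frac{5n^2+n}{2}$.
   Context: For a finite simple graph $G=(V,E)$ with $\ell=|V|+|E|$, a construction sequence (c-sequence) is a bijection $x:\{1,\dots,\ell\}\to V\sqcup E$ such that every edge $e=uw$ satisfies $x^{-1}(e)>\max\{x^{-1}(u),x^{-1}(w)\}$. The cost of $x$ is $\nu(x)=\sum_{e=uw\in E}\big(2x^{-1}(e)-x^{-1}(u)-x^{-1}(w)\big)$, and $\nu^*(G)$ is the maximum of $\nu(x)$ over all c-sequences for $G$. $K_{1,n}$ is the star with one hub vertex adjacent to $n$ leaves. *)

theory Defs
  imports Complex_Main
begin

definition simple_graph :: "'a set \<Rightarrow> 'a set set \<Rightarrow> bool" where
  "simple_graph V E \<longleftrightarrow> finite V \<and> (\<forall>e\<in>E. e \<subseteq> V \<and> card e = 2)"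

definition elems :: "'a set \<Rightarrow> 'a set set \<Rightarrow> ('a + 'a set) set" where
  "elems V E = Inl ` V \<union> Inr ` E"

definition pos :: "'a set \<Rightarrow> 'a set set \<Rightarrow> (nat \<Rightarrow> 'a + 'a set) \<Rightarrow> ('a + 'a set) \<Rightarrow> nat" where
  "pos V E x z = the_inv_into {1..card V + card E} x z"

definition cseq :: "'a set \<Rightarrow> 'a set set \<Rightarrow> (nat \<Rightarrow> 'a + 'a set) \<Rightarrow> bool" where
  "cseq V E x \<longleftrightarrow> bij_betw x {1..card V + card E} (elems V E) \<and>
     (\<forall>e\<in>E. \<forall>u\<in>e. pos V E x (Inr e) > pos V E x (Inl u))"

definition cost :: "'a set \<Rightarrow> 'a set set \<Rightarrow> (nat \<Rightarrow> 'a + 'a set) \<Rightarrow> int" where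
  "cost V E x = (\<Sum>e\<in>E. 2 * int (pos V E x (Inr e)) - (\<Sum>u\<in>e. int (pos V E x (Inl u))))"

definition nu_star :: "'a set \<Rightarrow> 'a set set \<Rightarrow> int" where
  "nu_star V E = Max {cost V E x | x. cseq V E x}"

definition star_V :: "nat \<Rightarrow> nat set" where
  "star_V n = {0..n}"

definition star_E :: "nat \<Rightarrow> nat set set" where
  "star_E n = {{0, i} | i. i \<in> {1..n}}"

end

theory Submission
  imports Defs
begin

text \<open>Let \<open>a\<close> be the position of the hub and \<open>L\<close>, \<open>B\<close> the sums of the positions of the
  leaves and of the edges. Then \<open>\<nu>(x) = 2B - n a - L\<close>, and as all positions together are
  \<open>1, \<dots>, 2n+1\<close>, \<open>B = (2n+1)(n+1) - a - L\<close>, so \<open>\<nu>(x) = (2n+1)(2n+2) - 3(a + L) - (n - 1) a\<close>.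
  The \<open>n+1\<close> vertex positions are distinct positive integers, so \<open>2(a + L) \<ge> (n+1)(n+2)\<close>,
  and \<open>a \<ge> 1\<close>; hence \<open>2\<nu>(x) \<le> 5n\<^sup>2 + n\<close>. Both bounds are attained by the sequence
  that lists the hub, then the leaves, then the edges.\<close>

lemma triangular_le_double_sum:
  fixes A :: "nat set"
  assumes "finite A" and "0 \<notin> A"
  shows "card A * (card A + 1) \<le> 2 * \<Sum>A"
  using assms
proof (induction "card A" arbitrary: A)
  case 0
  then show ?case by simp
next
  case (Suc k)
  define m where "m = Max A"
  have "A \<noteq> {}" using Suc.hyps(2) by auto
  then have m: "m \<in> A" using Max_in Suc.prems(1) m_def by blast
  have card: "card (A - {m}) = k"
    using Suc.hyps(2) m Suc.prems(1) by simp
  from Suc.prems have "finite (A - {m})" "0 \<notin> A - {m}"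
    by auto
  with Suc.hyps(1)[OF card[symmetric]] have IH: "k * (k + 1) \<le> 2 * \<Sum>(A - {m})"
    unfolding card by blast
  have "A \<subseteq> {1..m}"
    using Suc.prems by (auto simp: m_def Suc_le_eq intro: Max_ge gr0I)
  then have "Suc k \<le> m"
    using card_mono[of "{1..m}" A] Suc.hyps(2) by simp
  moreover have "\<Sum>A = \<Sum>(A - {m}) + m"
    using m Suc.prems(1) by (simp add: sum.remove)
  ultimately show ?case
    using IH Suc.hyps(2)[symmetric] by (simp add: algebra_simps)
qed

lemma pos_eqI:
  assumes "inj_on x {1..card V + card E}" and "k \<in> {1..card V + card E}" and "x k = z"
  shows "pos V E x z = k"
  unfolding pos_def using assms(1,3,2) by (rule the_inv_into_f_eq)

lemma cseq_pos_bij: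
  assumes "cseq V E x"
  shows "bij_betw (pos V E x) (elems V E) {1..card V + card E}"
  using assms unfolding cseq_def pos_def by (simp add: bij_betw_the_inv_into)

lemma cseq_pos_in:
  assumes "cseq V E x" and "z \<in> elems V E"
  shows "pos V E x z \<in> {1..card V + card E}"
  using cseq_pos_bij[OF assms(1)] assms(2) bij_betwE by blast

lemma cseq_finite:
  assumes "cseq V E x"
  shows "finite V" and "finite E"
proof -
  have "finite (elems V E)"
    using assms bij_betw_finite unfolding cseq_def by blast
  then show "finite V" "finite E"
    unfolding elems_def by (auto dest: finite_imageD)
qed

lemma cseq_double_sum_pos:
  assumes "cseq V E x"
  shows "2 * ((\<Sum>v\<in>V. pos V E x (Inl v)) + (\<Sum>e\<in>E. pos V E x (Inr e)))
    = (card V + card E) * (card V + card E + 1)"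
proof -
  have "(\<Sum>v\<in>V. pos V E x (Inl v)) + (\<Sum>e\<in>E. pos V E x (Inr e)) = (\<Sum>z\<in>elems V E. pos V E x z)"
    unfolding elems_def using cseq_finite[OF assms]
    by (subst sum.union_disjoint) (auto simp: sum.reindex)
  also have "\<dots> = \<Sum>{1..card V + card E}"
    using sum.reindex_bij_betw[OF cseq_pos_bij[OF assms], of id] by simp
  finally show ?thesis
    using double_gauss_sum_from_Suc_0[of "card V + card E", where 'a = nat] by simp
qed

lemma cseq_double_sum_vertex_pos_ge:
  assumes "cseq V E x"
  shows "card V * (card V + 1) \<le> 2 * (\<Sum>v\<in>V. pos V E x (Inl v))"
proof -
  let ?p = "\<lambda>v. pos V E x (Inl v)"
  have "inj_on (pos V E x) (Inl ` V)"
    using bij_betw_imp_inj_on[OF cseq_pos_bij[OF assms]] by (rule inj_on_subset) (auto simp: elems_def)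
  then have inj: "inj_on ?p V"
    by (simp add: inj_on_def)
  have "0 \<notin> ?p ` V"
    using cseq_pos_in[OF assms] by (force simp: elems_def)
  then have "card (?p ` V) * (card (?p ` V) + 1) \<le> 2 * \<Sum>(?p ` V)"
    using cseq_finite[OF assms] by (intro triangular_le_double_sum) auto
  then show ?thesis
    using inj by (simp add: card_image sum.reindex)
qed

lemma cseq_cost_nonneg:
  assumes "simple_graph V E" and "cseq V E x"
  shows "0 \<le> cost V E x"
  unfolding cost_def
proof (rule sum_nonneg)
  fix e assume e: "e \<in> E"
  have "(\<Sum>u\<in>e. int (pos V E x (Inl u))) \<le> (\<Sum>u\<in>e. int (pos V E x (Inr e)))"
    using assms(2) e unfolding cseq_def by (intro sum_mono) (simp add: less_imp_le)
  also have "\<dots> = 2 * int (pos V E x (Inr e))"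
    using assms(1) e unfolding simple_graph_def by simp
  finally show "0 \<le> 2 * int (pos V E x (Inr e)) - (\<Sum>u\<in>e. int (pos V E x (Inl u)))"
    by simp
qed

lemma nu_star_eqI:
  assumes "simple_graph V E" and "cseq V E x"
    and "\<And>y. cseq V E y \<Longrightarrow> cost V E y \<le> cost V E x"
  shows "nu_star V E = cost V E x"
proof -
  have "{cost V E y | y. cseq V E y} \<subseteq> {0..cost V E x}"
    using assms cseq_cost_nonneg by auto
  then have "finite {cost V E y | y. cseq V E y}"
    by (rule finite_subset) simp
  then show ?thesis
    unfolding nu_star_def using assms by (intro Max_eqI) auto
qed

lemma star_E_eq_image: "star_E n = (\<lambda>i. {0, i}) ` {1..n}"
  unfolding star_E_def by auto

lemma inj_on_star_edge: "inj_on (\<lambda>i::nat. {0, i}) {1..n}"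
  by (auto simp: inj_on_def doubleton_eq_iff)

lemma card_star_V: "card (star_V n) = n + 1"
  unfolding star_V_def by simp

lemma card_star_E: "card (star_E n) = n"
  unfolding star_E_eq_image using card_image[OF inj_on_star_edge] by simp

lemma simple_graph_star: "simple_graph (star_V n) (star_E n)"
  unfolding simple_graph_def star_V_def star_E_eq_image by auto

lemma elems_star: "elems (star_V n) (star_E n) = Inl ` {0..n} \<union> Inr ` (\<lambda>i. {0, i}) ` {1..n}"
  unfolding elems_def star_V_def star_E_eq_image by simp

lemma cost_star:
  "cost (star_V n) (star_E n) x =
    (\<Sum>i=1..n. 2 * int (pos (star_V n) (star_E n) x (Inr {0, i}))
      - int (pos (star_V n) (star_E n) x (Inl 0)) - int (pos (star_V n) (star_E n) x (Inl i)))"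
  unfolding cost_def star_E_eq_image
  by (subst sum.reindex[OF inj_on_star_edge]) (auto intro!: sum.cong)

lemma star_double_cost_le:
  assumes "cseq (star_V n) (star_E n) x" and "n \<ge> 1"
  shows "2 * cost (star_V n) (star_E n) x \<le> 5 * int n ^ 2 + int n"
proof -
  let ?p = "pos (star_V n) (star_E n) x"
  define a where "a = int (?p (Inl 0))"
  define L where "L = (\<Sum>i=1..n. int (?p (Inl i)))"
  define B where "B = (\<Sum>i=1..n. int (?p (Inr {0, i})))"
  have vertices: "(\<Sum>v\<in>star_V n. int (?p (Inl v))) = a + L"
    unfolding star_V_def a_def L_def by (simp add: sum.atLeast_Suc_atMost)
  have edges: "(\<Sum>e\<in>star_E n. int (?p (Inr e))) = B"
    using sum.reindex[OF inj_on_star_edge, of "\<lambda>e. int (?p (Inr e))"]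
    unfolding B_def star_E_eq_image[symmetric] by simp
  have "2 * (a + L + B) = (2 * int n + 1) * (2 * int n + 2)"
    using arg_cong[OF cseq_double_sum_pos[OF assms(1)], of int] vertices edges
    by (simp add: card_star_V card_star_E of_nat_sum algebra_simps)
  moreover have "(int n + 1) * (int n + 2) \<le> 2 * (a + L)"
  proof -
    have "int (card (star_V n) * (card (star_V n) + 1)) \<le> int (2 * (\<Sum>v\<in>star_V n. ?p (Inl v)))"
      using cseq_double_sum_vertex_pos_ge[OF assms(1)] by (rule of_nat_mono)
    then show ?thesis
      unfolding card_star_V vertices[symmetric] of_nat_mult of_nat_add of_nat_sum
      by (simp add: algebra_simps)
  qed
  moreover have "int n - 1 \<le> (int n - 1) * a"
  proof -
    have "1 \<le> a"
      using cseq_pos_in[OF assms(1)] unfolding a_def elems_star by auto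
    then show ?thesis
      using assms(2) by (simp add: mult_le_cancel_left1)
  qed
  moreover have "cost (star_V n) (star_E n) x = 2 * B - int n * a - L"
    unfolding cost_star a_def L_def B_def by (simp add: sum_subtractf sum_distrib_left)
  ultimately show ?thesis
    by (simp add: algebra_simps power2_eq_square)
qed

definition star_seq :: "nat \<Rightarrow> nat \<Rightarrow> nat + nat set" where
  "star_seq n k = (if k \<le> n + 1 then Inl (k - 1) else Inr {0, k - (n + 1)})"

definition star_seq_pos :: "nat \<Rightarrow> nat + nat set \<Rightarrow> nat" where
  "star_seq_pos n z = (case z of Inl v \<Rightarrow> v + 1 | Inr e \<Rightarrow> n + 1 + Max e)"

lemma bij_betw_star_seq:
  "bij_betw (star_seq n) {1..card (star_V n) + card (star_E n)} (elems (star_V n) (star_E n))"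
  unfolding elems_star card_star_V card_star_E
proof (rule bij_betw_byWitness[where f' = "star_seq_pos n"])
  show "\<forall>k\<in>{1..n + 1 + n}. star_seq_pos n (star_seq n k) = k"
    by (auto simp: star_seq_def star_seq_pos_def)
  show "\<forall>z\<in>Inl ` {0..n} \<union> Inr ` (\<lambda>i. {0, i}) ` {1..n}. star_seq n (star_seq_pos n z) = z"
    by (auto simp: star_seq_def star_seq_pos_def)
  show "star_seq n ` {1..n + 1 + n} \<subseteq> Inl ` {0..n} \<union> Inr ` (\<lambda>i. {0, i}) ` {1..n}"
    by (force simp: star_seq_def)
  show "star_seq_pos n ` (Inl ` {0..n} \<union> Inr ` (\<lambda>i. {0, i}) ` {1..n}) \<subseteq> {1..n + 1 + n}"
    by (auto simp: star_seq_pos_def)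
qed

lemma pos_star_seq:
  assumes "z \<in> elems (star_V n) (star_E n)"
  shows "pos (star_V n) (star_E n) (star_seq n) z = star_seq_pos n z"
  using assms
  by (intro pos_eqI[OF bij_betw_imp_inj_on[OF bij_betw_star_seq]])
    (auto simp: elems_star card_star_V card_star_E star_seq_def star_seq_pos_def)

lemma cseq_star_seq: "cseq (star_V n) (star_E n) (star_seq n)"
  unfolding cseq_def
proof (intro conjI ballI bij_betw_star_seq)
  fix e u assume "e \<in> star_E n" and u: "u \<in> e"
  then obtain i where i: "i \<in> {1..n}" and e: "e = {0, i}"
    unfolding star_E_eq_image by blast
  have "Inl u \<in> elems (star_V n) (star_E n)" "Inr e \<in> elems (star_V n) (star_E n)"
    using i u e unfolding elems_star by auto
  then show "pos (star_V n) (star_E n) (star_seq n) (Inl u) < pos (star_V n) (star_E n) (star_seq n) (Inr e)"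
    using i u e by (auto simp: pos_star_seq star_seq_pos_def)
qed

lemma double_cost_star_seq: "2 * cost (star_V n) (star_E n) (star_seq n) = 5 * int n ^ 2 + int n"
proof -
  have "cost (star_V n) (star_E n) (star_seq n) = (\<Sum>i=1..n. 2 * int n + int i)"
    unfolding cost_star by (rule sum.cong) (auto simp: pos_star_seq elems_star star_seq_pos_def)
  then show ?thesis
    using double_gauss_sum_from_Suc_0[of n, where 'a = int]
    by (simp add: sum.distrib algebra_simps power2_eq_square)
qed

theorem theorem2:
  fixes n :: nat
  assumes "n \<ge> 2"
  shows "real_of_int (nu_star (star_V n) (star_E n)) = (5 * real n ^ 2 + real n) / 2"
proof -
  have "nu_star (star_V n) (star_E n) = cost (star_V n) (star_E n) (star_seq n)"
  proof (rule nu_star_eqI[OF simple_graph_star cseq_star_seq])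
    fix y assume "cseq (star_V n) (star_E n) y"
    with assms have "2 * cost (star_V n) (star_E n) y \<le> 5 * int n ^ 2 + int n"
      by (intro star_double_cost_le) auto
    then show "cost (star_V n) (star_E n) y \<le> cost (star_V n) (star_E n) (star_seq n)"
      using double_cost_star_seq[of n] by linarith
  qed
  then have "2 * nu_star (star_V n) (star_E n) = 5 * int n ^ 2 + int n"
    using double_cost_star_seq[of n] by simp
  then have "real_of_int (2 * nu_star (star_V n) (star_E n)) = real_of_int (5 * int n ^ 2 + int n)"
    by (rule arg_cong)
  then show ?thesis
    by simp
qed

end
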